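(* Let $\theta$ be a comtrace alphabet. For all $T_1,T_2\in\mathsf{LCT}(\theta)$, the composition $T_1\odot T_2$ is an lsos-comtrace over $\theta$, i.e. $T_1\odot T_2\in\mathsf{LCT}(\theta)$.
   Context: So-structures: $(X,\prec,\sqsubset)$ with (S1) $\neg(\alpha\sqsubset\alpha)$; (S2) $\alpha\prec\beta\Rightarrow\alpha\sqsubset\beta$; (S3) $\alpha\sqsubset\beta\sqsubset\gamma\wedge\alpha\neq\gamma\Rightarrow\alpha\sqsubset\gamma$; (S4) $(\alpha\sqsubset\beta\prec\gamma)\vee(\alpha\prec\beta\sqsubset\gamma)\Rightarrow\alpha\prec\gamma$. Quotient: $\alpha\equiv_\sqsubset\beta$ iff $\alpha=\beta$ or ($\alpha\sqsubset\beta\wedge\beta\sqsubset\alpha$); classes $[\alpha]$; $[\alpha]\hat\prec[\beta]$ iff $[\alpha]\neq[\beta]$ and $([\alpha]\times[\beta])\cap\prec\neq\emptyset$; $\hat\sqsubset$ likewise. $R^{\mathrm{cov}}:=\{(x,y):xRy\wedge\neg\exists z(xRz\wedge zRy)\}$. $\lozenge$-closure: $(X,R_1,R_2)^\lozenge:=(X,(R_1\cup R_2)^*\circ R_1\circ(R_1\cup R_2)^*,(R_1\cup R_2)^*\setminus\mathrm{id}_X)$. Labeled structures are taken up to label-preserving isomorphism (bijections preserving/reflecting both relations and preserving labels); $[\cdot]$ denotes the class. Comtrace alphabet: $\theta=(E,sim,ser)$, $E$ finite, $ser\subseteq sim\subseteq E\times E$, $sim$ irreflexive symmetric. Lsos-comtrace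 over $\theta$: the class of a finite labeled so-structure $(X,\prec,\sqsubset,\lambda)$, $\lambda:X\to E$, such that for all $\alpha\neq\beta$: (LC1) $[\alpha]((\hat\sqsubset)^{\mathrm{cov}}\cap\hat\prec)[\beta]\Rightarrow\lambda[[\alpha]]\times\lambda[[\beta]]\not\subseteq ser$; (LC2) $[\alpha]((\hat\sqsubset)^{\mathrm{cov}}\setminus\hat\prec)[\beta]\Rightarrow\lambda[[\beta]]\times\lambda[[\alpha]]\not\subseteq ser$; (LC3) for nonempty $A,B\subseteq[\alpha]$ with $A\cup B=[\alpha]$, $\lambda[A]\times\lambda[B]\not\subseteq ser$; (LC4) $(\lambda\alpha,\lambda\beta)\notin ser\Rightarrow\alpha\prec\beta\vee\beta\sqsubset\alpha$; (LC5) $(\lambda\alpha,\lambda\beta)\notin sim\Rightarrow\alpha\prec\beta\vee\beta\prec\alpha$. $\mathsf{LCT}(\theta)$ is the set of these. Composition: for $T_i=[X_i,\prec_i,\sqsubset_i,\lambda_i]$ ($i=1,2$), with $X_1,X_2$ made disjoint, $T_1\odot T_2:=[X,\prec,\sqsubset,\lambda]$ where $X=X_1\uplus X_2$, $\lambda=\lambda_1\uplus\lambda_2$, $(X,\prec,\sqsubset)=(X,\prec_{\langle1,2\rangle},\sqsubset_{\langle1,2\rangle})^\lozenge$ with $\prec_{\langle1,2\rangle}=\prec_1\cup\prec_2\cup\{(\alpha,\beta)\in X_1\times X_2:(\lambda\alpha,\lambda\beta)\notin ser\}$ and $\sqsubset_{\langle1,2\rangle}=\sqsubset_1\cup\sqsubset_2\cup\{(\alpha,\beta)\in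 X_1\times X_2:(\lambda\beta,\lambda\alpha)\notin ser\}$. *)

theory Defs
  imports Main
begin

definition so_structure :: "'x set \<Rightarrow> 'x rel \<Rightarrow> 'x rel \<Rightarrow> bool" where
  "so_structure X P S \<longleftrightarrow>
     P \<subseteq> X \<times> X \<and> S \<subseteq> X \<times> X \<and>
     (\<forall>a\<in>X. (a, a) \<notin> S) \<and>
     (\<forall>a\<in>X. \<forall>b\<in>X. (a, b) \<in> P \<longrightarrow> (a, b) \<in> S) \<and>
     (\<forall>a\<in>X. \<forall>b\<in>X. \<forall>c\<in>X. (a, b) \<in> S \<and> (b, c) \<in> S \<and> a \<noteq> c \<longrightarrow> (a, c) \<in> S) \<and>
     (\<forall>a\<in>X. \<forall>b\<in>X. \<forall>c\<in>X.
        ((a, b) \<in> S \<and> (b, c) \<in> P) \<or> ((a, b) \<in> P \<and> (b, c) \<in> S) \<longrightarrow> (a, c) \<in> P)"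

definition sq_eqv :: "'x rel \<Rightarrow> 'x \<Rightarrow> 'x \<Rightarrow> bool" where
  "sq_eqv S a b \<longleftrightarrow> a = b \<or> ((a, b) \<in> S \<and> (b, a) \<in> S)"

definition sq_cls :: "'x set \<Rightarrow> 'x rel \<Rightarrow> 'x \<Rightarrow> 'x set" where
  "sq_cls X S a = {b \<in> X. sq_eqv S a b}"

definition hat :: "'x set \<Rightarrow> 'x rel \<Rightarrow> 'x rel \<Rightarrow> ('x set) rel" where
  "hat X S R = {(sq_cls X S a, sq_cls X S b) | a b.
      a \<in> X \<and> b \<in> X \<and> sq_cls X S a \<noteq> sq_cls X S b \<and>
      (sq_cls X S a \<times> sq_cls X S b) \<inter> R \<noteq> {}}"

definition cov :: "'a rel \<Rightarrow> 'a rel" where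
  "cov R = {(x, y). (x, y) \<in> R \<and> \<not> (\<exists>z. (x, z) \<in> R \<and> (z, y) \<in> R)}"

definition diamond :: "'x rel \<Rightarrow> 'x rel \<Rightarrow> 'x rel \<times> 'x rel" where
  "diamond R1 R2 = ((R1 \<union> R2)\<^sup>* O R1 O (R1 \<union> R2)\<^sup>*, (R1 \<union> R2)\<^sup>* - Id)"

definition comtrace_alphabet :: "'e set \<Rightarrow> 'e rel \<Rightarrow> 'e rel \<Rightarrow> bool" where
  "comtrace_alphabet E sim ser \<longleftrightarrow>
     finite E \<and> ser \<subseteq> sim \<and> sim \<subseteq> E \<times> E \<and> irrefl sim \<and> sym sim"

text \<open>A labeled so-structure (X, \<prec>, \<sqsubset>, \<lambda>).\<close>
type_synonym ('x, 'e) lsos = "'x set \<times> 'x rel \<times> 'x rel \<times> ('x \<Rightarrow> 'e)"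

text \<open>Membership of the
  isomorphism class in LCT(\<theta>) means that (any, equivalently every)
  representative satisfies this predicate.\<close>
definition lsos_comtrace :: "'e set \<Rightarrow> 'e rel \<Rightarrow> 'e rel \<Rightarrow> ('x, 'e) lsos \<Rightarrow> bool" where
  "lsos_comtrace E sim ser T \<longleftrightarrow>
     (case T of (X, P, S, lam) \<Rightarrow>
       finite X \<and> so_structure X P S \<and> lam ` X \<subseteq> E \<and>
       (\<forall>a\<in>X. \<forall>b\<in>X. a \<noteq> b \<longrightarrow>
          (sq_cls X S a, sq_cls X S b) \<in> cov (hat X S S) \<inter> hat X S P \<longrightarrow>
          \<not> (lam ` sq_cls X S a \<times> lam ` sq_cls X S b \<subseteq> ser)) \<and>
       (\<forall>a\<in>X. \<forall>b\<in>X. a \<noteq> b \<longrightarrow>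
          (sq_cls X S a, sq_cls X S b) \<in> cov (hat X S S) - hat X S P \<longrightarrow>
          \<not> (lam ` sq_cls X S b \<times> lam ` sq_cls X S a \<subseteq> ser)) \<and>
       (\<forall>a\<in>X. \<forall>A B. A \<noteq> {} \<and> B \<noteq> {} \<and> A \<subseteq> sq_cls X S a \<and> B \<subseteq> sq_cls X S a \<and>
          A \<union> B = sq_cls X S a \<longrightarrow> \<not> (lam ` A \<times> lam ` B \<subseteq> ser)) \<and>
       (\<forall>a\<in>X. \<forall>b\<in>X. a \<noteq> b \<longrightarrow> (lam a, lam b) \<notin> ser \<longrightarrow>
          (a, b) \<in> P \<or> (b, a) \<in> S) \<and>
       (\<forall>a\<in>X. \<forall>b\<in>X. a \<noteq> b \<longrightarrow> (lam a, lam b) \<notin> sim \<longrightarrow>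
          (a, b) \<in> P \<or> (b, a) \<in> P))"

text \<open>Composition of representatives; the carriers are made disjoint via the
  sum type (Inl for the first, Inr for the second).\<close>
definition comtrace_comp :: "'e rel \<Rightarrow> ('x, 'e) lsos \<Rightarrow> ('y, 'e) lsos \<Rightarrow> ('x + 'y, 'e) lsos" where
  "comtrace_comp ser T1 T2 =
     (case T1 of (X1, P1, S1, l1) \<Rightarrow> case T2 of (X2, P2, S2, l2) \<Rightarrow>
       let X = Inl ` X1 \<union> Inr ` X2;
           lam = case_sum l1 l2;
           P12 = map_prod Inl Inl ` P1 \<union> map_prod Inr Inr ` P2 \<union>
                 {(Inl a, Inr b) | a b. a \<in> X1 \<and> b \<in> X2 \<and> (l1 a, l2 b) \<notin> ser};
           S12 = map_prod Inl Inl ` S1 \<union> map_prod Inr Inr ` S2 \<union>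
                 {(Inl a, Inr b) | a b. a \<in> X1 \<and> b \<in> X2 \<and> (l2 b, l1 a) \<notin> ser}
       in (X, fst (diamond P12 S12), snd (diamond P12 S12), lam))"

end

theory Submission
  imports Defs
begin

(* Write X = X1 + X2, P12 and S12 for the generating relations of the
   composition and R = P12 \<union> S12, so that the composed structure has
   \<prec> = R\<^sup>* O P12 O R\<^sup>* and \<sqsubset> = R\<^sup>* - Id.  No R-step leads from the second component back
   to the first, and inside each component R-paths stay inside the old \<sqsubset>\<^sub>i; hence
   \<prec> and \<sqsubset> restrict to the old relations on each component (axioms S1-S4 of the
   component give this for \<prec>), no \<sqsubset>-class meets both components, and the result is an
   so-structure.  The locale composition applies this to both components; what remains
   are the mixed pairs (x in X1, y in X2): a covering pair of classes is connected by
   an R-path that cannot leave the two classes, so it contains an R-edge between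
   them, whose presence is explained by a non-serializable pair of labels. *)

section \<open>General facts on so-structures and their quotients\<close>

lemma soD:
  assumes "so_structure X P S"
  shows "P \<subseteq> X \<times> X" "S \<subseteq> X \<times> X" "\<And>a. a\<in>X \<Longrightarrow> (a, a) \<notin> S"
    "\<And>a b. a\<in>X \<Longrightarrow> b\<in>X \<Longrightarrow> (a, b) \<in> P \<Longrightarrow> (a, b) \<in> S"
    "\<And>a b c. a\<in>X \<Longrightarrow> b\<in>X \<Longrightarrow> c\<in>X \<Longrightarrow> (a, b) \<in> S \<Longrightarrow> (b, c) \<in> S \<Longrightarrow> a \<noteq> c \<Longrightarrow> (a, c) \<in> S"
    "\<And>a b c. a\<in>X \<Longrightarrow> b\<in>X \<Longrightarrow> c\<in>X \<Longrightarrow> (a, b) \<in> S \<Longrightarrow> (b, c) \<in> P \<Longrightarrow> (a, c) \<in> P"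
    "\<And>a b c. a\<in>X \<Longrightarrow> b\<in>X \<Longrightarrow> c\<in>X \<Longrightarrow> (a, b) \<in> P \<Longrightarrow> (b, c) \<in> S \<Longrightarrow> (a, c) \<in> P"
  using assms unfolding so_structure_def by blast+

lemma so_prec_extend:
  assumes so: "so_structure X P S"
    and "a = c \<or> (a, c) \<in> S" "(c, d) \<in> P" "d = b \<or> (d, b) \<in> S"
  shows "(a, b) \<in> P"
proof -
  have "(a, d) \<in> P" using assms(2,3) soD(1,2,6)[OF so] by blast
  then show ?thesis using assms(4) soD(1,2,7)[OF so] by blast
qed

lemma so_sqsub_extend:
  assumes so: "so_structure X P S" and "a = c \<or> (a, c) \<in> S" "(c, d) \<in> S"
  shows "a = d \<or> (a, d) \<in> S"
  using assms(2,3) soD(2,5)[OF so] by blast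

lemma cls_related:
  assumes so: "so_structure X P S" and "x \<in> sq_cls X S a" "y \<in> sq_cls X S a" "x \<noteq> y"
  shows "(y, x) \<in> S"
  using assms(2-4) soD(2,5)[OF so] unfolding sq_cls_def sq_eqv_def by blast

text \<open>Hence \<open>\<prec>\<close> never relates two elements of one class: \<open>x \<prec> y \<sqsubset> x\<close> would give \<open>x \<prec> x\<close>.\<close>
lemma cls_not_prec:
  assumes so: "so_structure X P S" and "x \<in> sq_cls X S a" "y \<in> sq_cls X S a"
  shows "(x, y) \<notin> P"
proof
  assume xy: "(x, y) \<in> P"
  have xX: "x \<in> X" "y \<in> X" using assms(2,3) by (auto simp: sq_cls_def)
  have "(x, x) \<in> P"
    using xy cls_related[OF so assms(2,3)] soD(7)[OF so xX(1) xX(2) xX(1)] by (cases "x = y") auto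
  then show False using soD(3,4)[OF so] xX by blast
qed

lemma cls_self: "x \<in> X \<Longrightarrow> x \<in> sq_cls X S x"
  by (simp add: sq_cls_def sq_eqv_def)

lemma cls_subset: "sq_cls X S a \<subseteq> X"
  by (auto simp: sq_cls_def)

lemma hat_iff:
  assumes "a \<in> X" "b \<in> X"
  shows "(sq_cls X S a, sq_cls X S b) \<in> hat X S R \<longleftrightarrow>
    sq_cls X S a \<noteq> sq_cls X S b \<and> (\<exists>x\<in>sq_cls X S a. \<exists>y\<in>sq_cls X S b. (x, y) \<in> R)"
  using assms unfolding hat_def by auto

lemma cov_iff: "(x, y) \<in> cov R \<longleftrightarrow> (x, y) \<in> R \<and> (\<forall>z. (x, z) \<in> R \<longrightarrow> (z, y) \<notin> R)"
  by (auto simp: cov_def)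

lemma hat_target: "(A, Z) \<in> hat X S R \<Longrightarrow> \<exists>z\<in>X. Z = sq_cls X S z"
  unfolding hat_def by auto

lemma path_cross:
  assumes "(x, y) \<in> R\<^sup>*" "x \<in> A" "y \<notin> A"
    "\<forall>z. (x, z) \<in> R\<^sup>* \<longrightarrow> (z, y) \<in> R\<^sup>* \<longrightarrow> z \<in> A \<union> B"
  shows "\<exists>u\<in>A. \<exists>v\<in>B. (u, v) \<in> R"
  using assms
proof (induction rule: rtrancl_induct)
  case base then show ?case by simp
next
  case (step y' y)
  show ?case
  proof (cases "y' \<in> A")
    case True
    have "y \<in> A \<union> B"
      using step.prems(3) step.hyps by (meson rtrancl.rtrancl_into_rtrancl rtrancl.rtrancl_refl)
    then show ?thesis using True step.hyps(2) step.prems(2) by blast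
  next
    case False
    have "\<forall>z. (x, z) \<in> R\<^sup>* \<longrightarrow> (z, y') \<in> R\<^sup>* \<longrightarrow> z \<in> A \<union> B"
      using step.prems(3) step.hyps(2) by (meson rtrancl.rtrancl_into_rtrancl)
    then show ?thesis using step.IH step.prems(1) False by blast
  qed
qed

lemma lsos_comtraceD:
  assumes "lsos_comtrace E sim ser (X, P, S, lam)"
  shows "finite X" "so_structure X P S" "lam ` X \<subseteq> E"
    "\<And>a b. a \<in> X \<Longrightarrow> b \<in> X \<Longrightarrow> a \<noteq> b \<Longrightarrow>
      (sq_cls X S a, sq_cls X S b) \<in> cov (hat X S S) \<inter> hat X S P \<Longrightarrow>
      \<not> (lam ` sq_cls X S a \<times> lam ` sq_cls X S b \<subseteq> ser)"
    "\<And>a b. a \<in> X \<Longrightarrow> b \<in> X \<Longrightarrow> a \<noteq> b \<Longrightarrow>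
      (sq_cls X S a, sq_cls X S b) \<in> cov (hat X S S) - hat X S P \<Longrightarrow>
      \<not> (lam ` sq_cls X S b \<times> lam ` sq_cls X S a \<subseteq> ser)"
    "\<And>a A B. a \<in> X \<Longrightarrow> A \<noteq> {} \<Longrightarrow> B \<noteq> {} \<Longrightarrow> A \<subseteq> sq_cls X S a \<Longrightarrow>
      B \<subseteq> sq_cls X S a \<Longrightarrow> A \<union> B = sq_cls X S a \<Longrightarrow>
      \<not> (lam ` A \<times> lam ` B \<subseteq> ser)"
    "\<And>a b. a \<in> X \<Longrightarrow> b \<in> X \<Longrightarrow> a \<noteq> b \<Longrightarrow> (lam a, lam b) \<notin> ser \<Longrightarrow>
      (a, b) \<in> P \<or> (b, a) \<in> S"
    "\<And>a b. a \<in> X \<Longrightarrow> b \<in> X \<Longrightarrow> a \<noteq> b \<Longrightarrow> (lam a, lam b) \<notin> sim \<Longrightarrow>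
      (a, b) \<in> P \<or> (b, a) \<in> P"
  using assms unfolding lsos_comtrace_def prod.case by simp_all

section \<open>Lsos-comtraces embedded into a labeled so-structure\<close>

text \<open>Then LC1-LC5 hold for all pairs inside the image.\<close>
locale comtrace_embedding =
  fixes E :: "'e set" and sim ser :: "'e rel"
    and Y :: "'y set" and Q T :: "'y rel" and l :: "'y \<Rightarrow> 'e"
    and X :: "'x set" and P S :: "'x rel" and lam :: "'x \<Rightarrow> 'e"
    and f :: "'y \<Rightarrow> 'x"
  assumes comtrace: "lsos_comtrace E sim ser (Y, Q, T, l)"
    and inj: "inj f"
    and into: "f ` Y \<subseteq> X"
    and prec_restr: "\<And>a b. a \<in> Y \<Longrightarrow> b \<in> Y \<Longrightarrow> (f a, f b) \<in> P \<longleftrightarrow> (a, b) \<in> Q"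
    and sqsub_restr: "\<And>a b. a \<in> Y \<Longrightarrow> b \<in> Y \<Longrightarrow> (f a, f b) \<in> S \<longleftrightarrow> (a, b) \<in> T"
    and cls_image: "\<And>a. a \<in> Y \<Longrightarrow> sq_cls X S (f a) = f ` sq_cls Y T a"
    and label: "\<And>a. a \<in> Y \<Longrightarrow> lam (f a) = l a"
begin

abbreviation "C \<equiv> sq_cls X S"
abbreviation "D \<equiv> sq_cls Y T"

lemma label_image: "A \<subseteq> Y \<Longrightarrow> lam ` f ` A = l ` A"
  using label by (force simp: image_image)

lemma hat_embed:
  assumes "a \<in> Y" "b \<in> Y" and restr: "\<And>x y. x \<in> Y \<Longrightarrow> y \<in> Y \<Longrightarrow> (f x, f y) \<in> R \<longleftrightarrow> (x, y) \<in> R'"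
  shows "(C (f a), C (f b)) \<in> hat X S R \<longleftrightarrow> (D a, D b) \<in> hat Y T R'"
proof -
  have fX: "f a \<in> X" "f b \<in> X" using assms(1,2) into by auto
  have "D a \<subseteq> Y" "D b \<subseteq> Y" by (simp_all add: cls_subset)
  then have edge: "(\<exists>x\<in>f ` D a. \<exists>y\<in>f ` D b. (x, y) \<in> R) \<longleftrightarrow> (\<exists>x\<in>D a. \<exists>y\<in>D b. (x, y) \<in> R')"
    using restr by blast
  have "(C (f a), C (f b)) \<in> hat X S R \<longleftrightarrow>
      C (f a) \<noteq> C (f b) \<and> (\<exists>x\<in>C (f a). \<exists>y\<in>C (f b). (x, y) \<in> R)"
    by (rule hat_iff[OF fX])
  also have "\<dots> \<longleftrightarrow> D a \<noteq> D b \<and> (\<exists>x\<in>D a. \<exists>y\<in>D b. (x, y) \<in> R')"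
    using edge by (simp add: cls_image assms(1,2) inj_image_eq_iff[OF inj])
  also have "\<dots> \<longleftrightarrow> (D a, D b) \<in> hat Y T R'"
    by (rule hat_iff[symmetric, OF assms(1,2)])
  finally show ?thesis .
qed

lemma hat_sqsub_embed:
  "a \<in> Y \<Longrightarrow> b \<in> Y \<Longrightarrow> (C (f a), C (f b)) \<in> hat X S S \<longleftrightarrow> (D a, D b) \<in> hat Y T T"
  by (rule hat_embed) (simp_all add: sqsub_restr)

lemma hat_prec_embed:
  "a \<in> Y \<Longrightarrow> b \<in> Y \<Longrightarrow> (C (f a), C (f b)) \<in> hat X S P \<longleftrightarrow> (D a, D b) \<in> hat Y T Q"
  by (rule hat_embed) (simp_all add: prec_restr)

text \<open>A covering pair of image classes covers already in the component: an intermediate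
  class of the component is an intermediate class of the big structure.\<close>
lemma cov_embed:
  assumes "a \<in> Y" "b \<in> Y" "(C (f a), C (f b)) \<in> cov (hat X S S)"
  shows "(D a, D b) \<in> cov (hat Y T T)"
  unfolding cov_iff
proof (intro conjI allI impI notI)
  show "(D a, D b) \<in> hat Y T T"
    using assms by (simp add: cov_iff hat_sqsub_embed)
next
  fix Z assume "(D a, Z) \<in> hat Y T T" "(Z, D b) \<in> hat Y T T"
  moreover obtain c where "c \<in> Y" "Z = D c" using hat_target \<open>(D a, Z) \<in> hat Y T T\<close> by metis
  ultimately have "(C (f a), C (f c)) \<in> hat X S S" "(C (f c), C (f b)) \<in> hat X S S"
    using assms(1,2) by (simp_all add: hat_sqsub_embed)
  then show False using assms(3) by (simp add: cov_iff)
qed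

lemmas component = lsos_comtraceD[OF comtrace]

lemma inherited_LC1:
  assumes "a \<in> Y" "b \<in> Y" "a \<noteq> b"
    and "(C (f a), C (f b)) \<in> cov (hat X S S) \<inter> hat X S P"
  shows "\<not> (lam ` C (f a) \<times> lam ` C (f b) \<subseteq> ser)"
  using assms component(4,5) cov_embed[OF assms(1,2)] hat_prec_embed[OF assms(1,2)]
  by (simp add: cls_image label_image cls_subset)

lemma inherited_LC2:
  assumes "a \<in> Y" "b \<in> Y" "a \<noteq> b"
    and "(C (f a), C (f b)) \<in> cov (hat X S S) - hat X S P"
  shows "\<not> (lam ` C (f b) \<times> lam ` C (f a) \<subseteq> ser)"
  using assms component(4,5) cov_embed[OF assms(1,2)] hat_prec_embed[OF assms(1,2)]
  by (simp add: cls_image label_image cls_subset)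

text \<open>Every splitting of an image class is the image of a splitting of a component class.\<close>
lemma inherited_LC3:
  assumes "a \<in> Y" "A \<noteq> {}" "B \<noteq> {}" "A \<union> B = C (f a)"
  shows "\<not> (lam ` A \<times> lam ` B \<subseteq> ser)"
proof -
  define A' where "A' = f -` A"
  define B' where "B' = f -` B"
  have "A \<union> B \<subseteq> range f" using assms(4) cls_image[OF assms(1)] by auto
  then have AA: "A = f ` A'" and BB: "B = f ` B'"
    unfolding A'_def B'_def by blast+
  have "f ` (A' \<union> B') = f ` D a"
    using assms(4) cls_image[OF assms(1)] unfolding image_Un AA BB by simp
  then have split: "A' \<union> B' = D a" by (simp only: inj_image_eq_iff[OF inj])
  have "A' \<noteq> {}" "B' \<noteq> {}" using assms(2,3) AA BB by auto
  moreover have "A' \<subseteq> D a" "B' \<subseteq> D a" using split by blast+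
  ultimately have "\<not> (l ` A' \<times> l ` B' \<subseteq> ser)" using component(6)[OF assms(1)] split by blast
  moreover have "A' \<subseteq> Y" "B' \<subseteq> Y" using \<open>A' \<subseteq> D a\<close> \<open>B' \<subseteq> D a\<close> cls_subset[of Y T a] by blast+
  ultimately show ?thesis unfolding AA BB by (simp add: label_image)
qed

lemma inherited_LC4:
  "a \<in> Y \<Longrightarrow> b \<in> Y \<Longrightarrow> a \<noteq> b \<Longrightarrow> (lam (f a), lam (f b)) \<notin> ser \<Longrightarrow>
    (f a, f b) \<in> P \<or> (f b, f a) \<in> S"
  using component(7) by (simp add: label prec_restr sqsub_restr)

lemma inherited_LC5:
  "a \<in> Y \<Longrightarrow> b \<in> Y \<Longrightarrow> a \<noteq> b \<Longrightarrow> (lam (f a), lam (f b)) \<notin> sim \<Longrightarrow>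
    (f a, f b) \<in> P \<or> (f b, f a) \<in> P"
  using component(8) by (simp add: label prec_restr)

end

section \<open>The composition of two lsos-comtraces\<close>

locale composition =
  fixes E :: "'e set" and sim ser :: "'e rel"
    and X1 :: "'x set" and P1 S1 :: "'x rel" and l1 :: "'x \<Rightarrow> 'e"
    and X2 :: "'y set" and P2 S2 :: "'y rel" and l2 :: "'y \<Rightarrow> 'e"
  assumes alph: "comtrace_alphabet E sim ser"
    and T1: "lsos_comtrace E sim ser (X1, P1, S1, l1)"
    and T2: "lsos_comtrace E sim ser (X2, P2, S2, l2)"
begin

definition "X = Inl ` X1 \<union> Inr ` X2"
definition "lam = case_sum l1 l2"
definition "P12 = map_prod Inl Inl ` P1 \<union> map_prod Inr Inr ` P2 \<union>
                 {(Inl a, Inr b) | a b. a \<in> X1 \<and> b \<in> X2 \<and> (l1 a, l2 b) \<notin> ser}"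
definition "S12 = map_prod Inl Inl ` S1 \<union> map_prod Inr Inr ` S2 \<union>
                 {(Inl a, Inr b) | a b. a \<in> X1 \<and> b \<in> X2 \<and> (l2 b, l1 a) \<notin> ser}"
definition "R = P12 \<union> S12"
definition "P = R\<^sup>* O P12 O R\<^sup>*"
definition "S = R\<^sup>* - Id"

lemma so_components: "so_structure X1 P1 S1" "so_structure X2 P2 S2"
  using lsos_comtraceD(2) T1 T2 by blast+

lemmas so1 = soD[OF so_components(1)] and so2 = soD[OF so_components(2)]

lemma R_cases:
  assumes "(v, w) \<in> R"
  obtains (Left) c d where "v = Inl c" "w = Inl d" "(c, d) \<in> S1"
    | (Right) c d where "v = Inr c" "w = Inr d" "(c, d) \<in> S2"
    | (Cross) c d where "v = Inl c" "w = Inr d" "c \<in> X1" "d \<in> X2"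
proof -
  have "P1 \<subseteq> S1" "P2 \<subseteq> S2" using so1(1,4) so2(1,4) by blast+
  then show ?thesis using assms that unfolding R_def P12_def S12_def by blast
qed

lemma P12_cases:
  assumes "(v, w) \<in> P12"
  obtains (Left) c d where "v = Inl c" "w = Inl d" "(c, d) \<in> P1"
    | (Right) c d where "v = Inr c" "w = Inr d" "(c, d) \<in> P2"
    | (Cross) c d where "v = Inl c" "w = Inr d" "c \<in> X1" "d \<in> X2" "(l1 c, l2 d) \<notin> ser"
  using assms that unfolding P12_def by blast

text \<open>Reachability invariant: R-paths inside a component follow the old \<open>\<sqsubset>\<close>
  (reflexively), and no R-path leads from X2 back to X1.\<close>
definition "reach_bound = Id \<union> {(Inl a, Inl b) | a b. (a, b) \<in> S1} \<union>
    {(Inr a, Inr b) | a b. (a, b) \<in> S2} \<union> {(Inl a, Inr b) | a b. a \<in> X1 \<and> b \<in> X2}"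

lemma reach_bound_step:
  assumes "(u, v) \<in> reach_bound" "(v, w) \<in> R"
  shows "(u, w) \<in> reach_bound"
  using assms(2)
proof (cases rule: R_cases)
  case (Left c d)
  have "\<And>a. a = c \<or> (a, c) \<in> S1 \<Longrightarrow> a = d \<or> (a, d) \<in> S1"
    by (rule so_sqsub_extend[OF so_components(1) _ Left(3)])
  then show ?thesis using assms(1) Left unfolding reach_bound_def by auto
next
  case (Right c d)
  have "\<And>a. a = c \<or> (a, c) \<in> S2 \<Longrightarrow> a = d \<or> (a, d) \<in> S2"
    by (rule so_sqsub_extend[OF so_components(2) _ Right(3)])
  moreover have "d \<in> X2" using Right(3) so2(2) by auto
  ultimately show ?thesis using assms(1) Right unfolding reach_bound_def by auto
next
  case (Cross c d)
  then show ?thesis using assms(1) so1(2) unfolding reach_bound_def by auto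
qed

lemma rtrancl_R_bound: "(u, v) \<in> R\<^sup>* \<Longrightarrow> (u, v) \<in> reach_bound"
proof (induction rule: rtrancl_induct)
  case base then show ?case by (simp add: reach_bound_def)
next
  case (step v w) show ?case using step.IH step.hyps(2) by (rule reach_bound_step)
qed

lemma reach_Left: "(Inl a, Inl b) \<in> R\<^sup>* \<Longrightarrow> a = b \<or> (a, b) \<in> S1"
  by (drule rtrancl_R_bound) (auto simp: reach_bound_def)

lemma reach_Right: "(Inr a, Inr b) \<in> R\<^sup>* \<Longrightarrow> a = b \<or> (a, b) \<in> S2"
  by (drule rtrancl_R_bound) (auto simp: reach_bound_def)

lemma no_reach_back: "(Inr a, Inl b) \<notin> R\<^sup>*"
  using rtrancl_R_bound by (auto simp: reach_bound_def)

lemma S_Left: "(Inl a, Inl b) \<in> S \<longleftrightarrow> (a, b) \<in> S1"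
proof
  assume "(a, b) \<in> S1"
  moreover from this have "a \<noteq> b" using so1(2,3) by blast
  ultimately show "(Inl a, Inl b) \<in> S" unfolding S_def R_def S12_def by auto
qed (use reach_Left in \<open>auto simp: S_def\<close>)

lemma S_Right: "(Inr a, Inr b) \<in> S \<longleftrightarrow> (a, b) \<in> S2"
proof
  assume "(a, b) \<in> S2"
  moreover from this have "a \<noteq> b" using so2(2,3) by blast
  ultimately show "(Inr a, Inr b) \<in> S" unfolding S_def R_def S12_def by auto
qed (use reach_Right in \<open>auto simp: S_def\<close>)

lemma S_back: "(Inr a, Inl b) \<notin> S"
  using no_reach_back by (simp add: S_def)

lemma P12_sub_P: "P12 \<subseteq> P"
  unfolding P_def by auto

lemma P_sub_rtrancl: "P \<subseteq> R\<^sup>*"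
proof -
  have "P12 \<subseteq> R\<^sup>*" unfolding R_def by auto
  then have "P \<subseteq> R\<^sup>* O R\<^sup>* O R\<^sup>*" unfolding P_def by blast
  then show ?thesis by simp
qed

text \<open>On each component the new \<open>\<prec>\<close> is the old one: a path \<open>a \<rightarrow>\<^sup>* c \<prec> d \<rightarrow>\<^sup>* b\<close> with both
  ends in one component stays there, and S4 absorbs the \<open>\<sqsubset>\<close>-segments.\<close>
lemma P_Left: "(Inl a, Inl b) \<in> P \<longleftrightarrow> (a, b) \<in> P1"
proof
  assume "(Inl a, Inl b) \<in> P"
  then obtain w w' where w: "(Inl a, w) \<in> R\<^sup>*" "(w, w') \<in> P12" "(w', Inl b) \<in> R\<^sup>*"
    unfolding P_def by blast
  from w(2) show "(a, b) \<in> P1"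
  proof (cases rule: P12_cases)
    case (Left c d)
    then show ?thesis
      using w reach_Left so_prec_extend[OF so_components(1)] by metis
  qed (use w(3) no_reach_back in auto)
next
  assume "(a, b) \<in> P1"
  then show "(Inl a, Inl b) \<in> P" using P12_sub_P unfolding P12_def by auto
qed

lemma P_Right: "(Inr a, Inr b) \<in> P \<longleftrightarrow> (a, b) \<in> P2"
proof
  assume "(Inr a, Inr b) \<in> P"
  then obtain w w' where w: "(Inr a, w) \<in> R\<^sup>*" "(w, w') \<in> P12" "(w', Inr b) \<in> R\<^sup>*"
    unfolding P_def by blast
  from w(2) show "(a, b) \<in> P2"
  proof (cases rule: P12_cases)
    case (Right c d)
    then show ?thesis
      using w reach_Right so_prec_extend[OF so_components(2)] by metis
  qed (use w(1) no_reach_back in auto)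
next
  assume "(a, b) \<in> P2"
  then show "(Inr a, Inr b) \<in> P" using P12_sub_P unfolding P12_def by auto
qed

lemma P_irrefl: "(u, u) \<notin> P"
  by (cases u) (use P_Left P_Right so1(1,3,4) so2(1,3,4) in blast)+

lemma X_cases:
  assumes "u \<in> X"
  obtains (Left) a where "u = Inl a" "a \<in> X1" | (Right) a where "u = Inr a" "a \<in> X2"
  using assms unfolding X_def by blast

lemma X_Left [simp]: "Inl a \<in> X \<longleftrightarrow> a \<in> X1"
  and X_Right [simp]: "Inr b \<in> X \<longleftrightarrow> b \<in> X2"
  unfolding X_def by auto

lemma X_pair_cases:
  assumes "u \<in> X" "v \<in> X"
  obtains (Left) a b where "u = Inl a" "v = Inl b" "a \<in> X1" "b \<in> X1"
    | (Cross) a b where "u = Inl a" "v = Inr b" "a \<in> X1" "b \<in> X2"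
    | (Back) a b where "u = Inr a" "v = Inl b" "a \<in> X2" "b \<in> X1"
    | (Right) a b where "u = Inr a" "v = Inr b" "a \<in> X2" "b \<in> X2"
  using assms that unfolding X_def by blast

lemma R_carrier: "R \<subseteq> X \<times> X"
proof
  fix p assume "p \<in> R"
  then obtain v w where "p = (v, w)" "(v, w) \<in> R" by (cases p) auto
  from this(2) show "p \<in> X \<times> X"
    by (cases rule: R_cases) (use \<open>p = (v, w)\<close> so1(2) so2(2) in auto)
qed

text \<open>The composition is an so-structure: \<open>\<sqsubset>\<close> is transitive by construction, \<open>\<prec>\<close> is
  irreflexive by the component analysis, and S4 holds because \<open>\<prec>\<close> absorbs R-paths.\<close>
lemma so: "so_structure X P S"
proof -
  have S_carrier: "S \<subseteq> X \<times> X"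
    using trancl_subset_Sigma[OF R_carrier] by (auto simp: S_def rtrancl_eq_or_trancl)
  have P_sub_S: "P \<subseteq> S" using P_sub_rtrancl P_irrefl by (auto simp: S_def)
  have absorb: "R\<^sup>* O P \<subseteq> P" "P O R\<^sup>* \<subseteq> P"
    unfolding P_def by (blast intro: rtrancl_trans)+
  show ?thesis unfolding so_structure_def
  proof (intro conjI ballI impI)
    show "P \<subseteq> X \<times> X" using P_sub_S S_carrier by blast
    show "S \<subseteq> X \<times> X" by (rule S_carrier)
    show "(a, c) \<in> S" if "(a, b) \<in> S \<and> (b, c) \<in> S \<and> a \<noteq> c" for a b c
      using that unfolding S_def by (auto intro: rtrancl_trans)
    show "(a, c) \<in> P" if "(a, b) \<in> S \<and> (b, c) \<in> P \<or> (a, b) \<in> P \<and> (b, c) \<in> S" for a b c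
      using that absorb unfolding S_def by blast
  qed (use P_sub_S in \<open>auto simp: S_def\<close>)
qed

abbreviation "C \<equiv> sq_cls X S"

lemma cls_Left: "a \<in> X1 \<Longrightarrow> C (Inl a) = Inl ` sq_cls X1 S1 a"
  unfolding sq_cls_def sq_eqv_def X_def by (auto simp: S_Left S_back)

lemma cls_Right: "a \<in> X2 \<Longrightarrow> C (Inr a) = Inr ` sq_cls X2 S2 a"
  unfolding sq_cls_def sq_eqv_def X_def by (auto simp: S_Right S_back)

sublocale left: comtrace_embedding E sim ser X1 P1 S1 l1 X P S lam Inl
  by unfold_locales (use T1 in \<open>auto simp: P_Left S_Left cls_Left lam_def\<close>)

sublocale right: comtrace_embedding E sim ser X2 P2 S2 l2 X P S lam Inr
  by unfold_locales (use T2 in \<open>auto simp: P_Right S_Right cls_Right lam_def\<close>)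

text \<open>A point on an R-path between the two classes of a covering pair lies in one of them:
  otherwise its class would lie strictly between them.\<close>
lemma cover_path:
  assumes "a \<in> X" "b \<in> X" "(C a, C b) \<in> cov (hat X S S)" "x \<in> C a" "y \<in> C b"
    "(x, z) \<in> R\<^sup>*" "(z, y) \<in> R\<^sup>*"
  shows "z \<in> C a \<union> C b"
proof (rule ccontr)
  assume out: "z \<notin> C a \<union> C b"
  then have "(x, z) \<in> S" "(z, y) \<in> S" using assms(4-7) unfolding S_def by auto
  moreover from this have "z \<in> X" using soD(2)[OF so] by blast
  ultimately have "(C a, C z) \<in> hat X S S" "(C z, C b) \<in> hat X S S"
    using out assms(1,2,4,5) cls_self[of z X S] by (auto simp: hat_iff)
  then show False using assms(3) by (simp add: cov_iff)
qed

lemma no_hat_back: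
  assumes "a \<in> X2" "b \<in> X1"
  shows "(C (Inr a), C (Inl b)) \<notin> hat X S S"
proof
  have ab: "Inr a \<in> X" "Inl b \<in> X" using assms by simp_all
  assume "(C (Inr a), C (Inl b)) \<in> hat X S S"
  then obtain x y where "x \<in> C (Inr a)" "y \<in> C (Inl b)" "(x, y) \<in> S"
    unfolding hat_iff[OF ab] by blast
  then show False using S_back by (auto simp: cls_Left[OF assms(2)] cls_Right[OF assms(1)])
qed

text \<open>LC1 for a covering pair from X1 to X2 related by \<open>\<prec>\<close>: the \<open>P12\<close>-edge of a witnessing
  path lies between the two classes (inside one class it would contradict
  \<open>cls_not_prec\<close>), so it is a cross edge with non-serializable labels.\<close>
lemma cross_LC1:
  assumes a: "a \<in> X1" and b: "b \<in> X2"
    and cv: "(C (Inl a), C (Inr b)) \<in> cov (hat X S S)"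
    and hp: "(C (Inl a), C (Inr b)) \<in> hat X S P"
  shows "\<not> (lam ` C (Inl a) \<times> lam ` C (Inr b) \<subseteq> ser)"
proof -
  have ab: "Inl a \<in> X" "Inr b \<in> X" using a b by simp_all
  obtain x y where xy: "x \<in> C (Inl a)" "y \<in> C (Inr b)" "(x, y) \<in> P"
    using hp by (auto simp: hat_iff[OF ab])
  then obtain w w' where w: "(x, w) \<in> R\<^sup>*" "(w, w') \<in> P12" "(w', y) \<in> R\<^sup>*"
    unfolding P_def by blast
  have "(w, w') \<in> R" using w(2) unfolding R_def by simp
  then have "w \<in> C (Inl a) \<union> C (Inr b)" "w' \<in> C (Inl a) \<union> C (Inr b)"
    using cover_path[OF ab cv xy(1,2)] w(1,3) by (meson rtrancl_trans r_into_rtrancl)+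
  moreover have "(w, w') \<notin> P" if "w \<in> C u" "w' \<in> C u" for u
    using cls_not_prec[OF so that] .
  moreover have "(w, w') \<in> P" using w(2) P12_sub_P by blast
  ultimately consider "w \<in> C (Inl a)" "w' \<in> C (Inr b)" | "w \<in> C (Inr b)" "w' \<in> C (Inl a)"
    by blast
  then have "w \<in> C (Inl a) \<and> w' \<in> C (Inr b) \<and> (lam w, lam w') \<notin> ser"
  proof cases
    case 1
    from w(2) show ?thesis
      by (cases rule: P12_cases) (use 1 in \<open>auto simp: cls_Left[OF a] cls_Right[OF b] lam_def\<close>)
  next
    case 2
    from w(2) show ?thesis
      by (cases rule: P12_cases) (use 2 in \<open>auto simp: cls_Left[OF a] cls_Right[OF b]\<close>)
  qed
  then show ?thesis by blast
qed

text \<open>LC2 for a covering pair from X1 to X2 not related by \<open>\<prec>\<close>: a \<open>\<sqsubset>\<close>-path between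
  the classes crosses from one to the other by an R-edge; it is no \<open>P12\<close>-edge, so it
  is an \<open>S12\<close>-cross edge, whose labels are non-serializable in reverse order.\<close>
lemma cross_LC2:
  assumes a: "a \<in> X1" and b: "b \<in> X2"
    and cv: "(C (Inl a), C (Inr b)) \<in> cov (hat X S S)"
    and hp: "(C (Inl a), C (Inr b)) \<notin> hat X S P"
  shows "\<not> (lam ` C (Inr b) \<times> lam ` C (Inl a) \<subseteq> ser)"
proof -
  have ab: "Inl a \<in> X" "Inr b \<in> X" using a b by simp_all
  have hs: "(C (Inl a), C (Inr b)) \<in> hat X S S" using cv by (simp add: cov_iff)
  then obtain x y where xy: "x \<in> C (Inl a)" "y \<in> C (Inr b)" "(x, y) \<in> S"
    by (auto simp: hat_iff[OF ab])
  have "(x, y) \<in> R\<^sup>*" using xy(3) unfolding S_def by simp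
  moreover have "y \<notin> C (Inl a)" using xy(2) by (auto simp: cls_Left[OF a] cls_Right[OF b])
  ultimately obtain u v where uv: "u \<in> C (Inl a)" "v \<in> C (Inr b)" "(u, v) \<in> R"
    using path_cross[of x y R "C (Inl a)" "C (Inr b)"] cover_path[OF ab cv xy(1,2)] xy(1) by blast
  obtain p q where pq: "u = Inl p" "v = Inr q"
    using uv(1,2) by (auto simp: cls_Left[OF a] cls_Right[OF b])
  have "(u, v) \<notin> P12"
  proof
    assume "(u, v) \<in> P12"
    then have "(C (Inl a), C (Inr b)) \<in> hat X S P"
      using hs uv(1,2) P12_sub_P by (auto simp: hat_iff[OF ab])
    then show False using hp by contradiction
  qed
  then have "(u, v) \<in> S12" using uv(3) unfolding R_def by simp
  then have "(lam v, lam u) \<notin> ser" using pq unfolding S12_def lam_def by auto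
  then show ?thesis using uv by blast
qed

lemma LC1:
  assumes "u \<in> X" "v \<in> X" "u \<noteq> v" "(C u, C v) \<in> cov (hat X S S) \<inter> hat X S P"
  shows "\<not> (lam ` C u \<times> lam ` C v \<subseteq> ser)"
  using assms(1,2)
proof (cases rule: X_pair_cases)
  case (Left a b) then show ?thesis using assms(3,4) by (simp add: left.inherited_LC1)
next
  case (Cross a b) then show ?thesis using cross_LC1 assms(4) by blast
next
  case (Back a b) then show ?thesis using no_hat_back assms(4) by (auto simp: cov_iff)
next
  case (Right a b) then show ?thesis using assms(3,4) by (simp add: right.inherited_LC1)
qed

lemma LC2:
  assumes "u \<in> X" "v \<in> X" "u \<noteq> v" "(C u, C v) \<in> cov (hat X S S) - hat X S P"
  shows "\<not> (lam ` C v \<times> lam ` C u \<subseteq> ser)"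
  using assms(1,2)
proof (cases rule: X_pair_cases)
  case (Left a b) then show ?thesis using assms(3,4) by (simp add: left.inherited_LC2)
next
  case (Cross a b) then show ?thesis using cross_LC2 assms(4) by blast
next
  case (Back a b) then show ?thesis using no_hat_back assms(4) by (auto simp: cov_iff)
next
  case (Right a b) then show ?thesis using assms(3,4) by (simp add: right.inherited_LC2)
qed

lemma LC3:
  assumes "u \<in> X" "A \<noteq> {}" "B \<noteq> {}" "A \<union> B = C u"
  shows "\<not> (lam ` A \<times> lam ` B \<subseteq> ser)"
  using assms(1)
proof (cases rule: X_cases)
  case (Left a) then show ?thesis using assms(2-4) by (simp add: left.inherited_LC3)
next
  case (Right a) then show ?thesis using assms(2-4) by (simp add: right.inherited_LC3)
qed

lemma LC4:
  assumes "u \<in> X" "v \<in> X" "u \<noteq> v" "(lam u, lam v) \<notin> ser"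
  shows "(u, v) \<in> P \<or> (v, u) \<in> S"
  using assms(1,2)
proof (cases rule: X_pair_cases)
  case (Left a b) then show ?thesis using assms(3,4) by (simp add: left.inherited_LC4)
next
  case (Cross a b)
  then have "(u, v) \<in> P12" using assms(4) unfolding P12_def lam_def by auto
  then show ?thesis using P12_sub_P by blast
next
  case (Back a b)
  then have "(v, u) \<in> R" using assms(4) unfolding R_def S12_def lam_def by auto
  then show ?thesis using assms(3) unfolding S_def by auto
next
  case (Right a b) then show ?thesis using assms(3,4) by (simp add: right.inherited_LC4)
qed

lemma LC5:
  assumes "u \<in> X" "v \<in> X" "u \<noteq> v" "(lam u, lam v) \<notin> sim"
  shows "(u, v) \<in> P \<or> (v, u) \<in> P"
proof -
  have ser_sim: "ser \<subseteq> sim" and "sym sim" using alph unfolding comtrace_alphabet_def by auto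
  then have "(lam v, lam u) \<notin> sim" using assms(4) by (auto dest: symD)
  from assms(1,2) show ?thesis
  proof (cases rule: X_pair_cases)
    case (Left a b) then show ?thesis using assms(3,4) by (simp add: left.inherited_LC5)
  next
    case (Cross a b)
    then have "(u, v) \<in> P12" using assms(4) ser_sim unfolding P12_def lam_def by auto
    then show ?thesis using P12_sub_P by blast
  next
    case (Back a b)
    then have "(v, u) \<in> P12" using \<open>(lam v, lam u) \<notin> sim\<close> ser_sim unfolding P12_def lam_def by auto
    then show ?thesis using P12_sub_P by blast
  next
    case (Right a b) then show ?thesis using assms(3,4) by (simp add: right.inherited_LC5)
  qed
qed

lemma composition_is_comtrace: "lsos_comtrace E sim ser (X, P, S, lam)"
  unfolding lsos_comtrace_def prod.case
proof (intro conjI ballI allI impI)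
  show "finite X" using lsos_comtraceD(1)[OF T1] lsos_comtraceD(1)[OF T2] unfolding X_def by simp
  show "lam ` X \<subseteq> E"
    using lsos_comtraceD(3)[OF T1] lsos_comtraceD(3)[OF T2] unfolding X_def lam_def by auto
qed (simp_all add: so LC1 LC2 LC3 LC4 LC5)

lemma comtrace_comp_eq: "comtrace_comp ser (X1, P1, S1, l1) (X2, P2, S2, l2) = (X, P, S, lam)"
  unfolding comtrace_comp_def Let_def diamond_def X_def P_def S_def lam_def R_def P12_def S12_def
  by simp

end

theorem mainTheorem13:
  fixes E :: "'e set" and sim ser :: "'e rel"
    and T1 :: "('x, 'e) lsos" and T2 :: "('y, 'e) lsos"
  assumes "comtrace_alphabet E sim ser"
    and "lsos_comtrace E sim ser T1"
    and "lsos_comtrace E sim ser T2"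
  shows "lsos_comtrace E sim ser (comtrace_comp ser T1 T2)"
proof -
  obtain X1 P1 S1 l1 where T1_eq: "T1 = (X1, P1, S1, l1)" by (cases T1) auto
  obtain X2 P2 S2 l2 where T2_eq: "T2 = (X2, P2, S2, l2)" by (cases T2) auto
  interpret composition E sim ser X1 P1 S1 l1 X2 P2 S2 l2
    using assms unfolding T1_eq T2_eq by unfold_locales
  show ?thesis unfolding T1_eq T2_eq comtrace_comp_eq by (rule composition_is_comtrace)
qed

end
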